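(* Let $\Omega$ be a set and $Q$ an index set of partitions of $\Omega$ closed under join. For $S\in P_Q(\Omega)$ let $\mathcal{D}_S=\{f\in\mathcal{L}(\Omega):\inf_{\omega\in S}f(\omega)>0\}\cup\mathcal{L}^+(\Omega)$. Then for all $S,T\in P_Q(\Omega)$ and $x\in Q$: (1) $\mathcal{D}_S\cdot\mathcal{D}_T=\mathcal{D}_{S\cap T}$; (2) $\mathcal{D}_\emptyset=\mathcal{L}(\Omega)$ and $\mathcal{D}_\Omega=\mathcal{L}^+(\Omega)$; (3) $\epsilon_x(\mathcal{D}_S)=\mathcal{D}_{\sigma_x(S)}$.
   Context: A gamble is a bounded function $\Omega\to\mathbb{R}$; $\mathcal{L}(\Omega)$ is the set of gambles, $\mathcal{L}^+(\Omega)=\{f:f\ge0,f\ne0\}$. The infimum over the empty set is $+\infty$. A set $\mathcal{D}\subseteq\mathcal{L}(\Omega)$ is coherent if $\mathcal{L}^+(\Omega)\subseteq\mathcal{D}$, $0\notin\mathcal{D}$, and $\mathcal{D}$ is closed under addition and under multiplication by positive reals. $\Phi$ = coherent sets $\cup\{\mathcal{L}(\Omega)\}$; $\mathcal{C}(\mathcal{K})=\bigcap\{\mathcal{D}\in\Phi:\mathcal{K}\subseteq\mathcal{D}\}$. Combination: $\mathcal{D}_1\cdot\mathcal{D}_2=\mathcal{C}(\mathcal{D}_1\cup\mathcal{D}_2)$. Each $x\in Q$ corresponds to a partition $\mathcal{P}_x$ of $\Omega$ with equivalence relation $\equiv_x$; the family $\{\mathcal{P}_x\}$ is closed under join (partition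 into nonempty intersections of blocks). $\mathcal{L}_x$ is the set of gambles constant on each block of $\mathcal{P}_x$, and $\epsilon_x(\mathcal{D})=\mathcal{C}(\mathcal{D}\cap\mathcal{L}_x)$. Saturation: $\sigma_x(S)=\{\omega\in\Omega:\exists\omega'\in S,\ \omega\equiv_x\omega'\}$. $P_Q(\Omega)$ is the family of $S\subseteq\Omega$ with $\sigma_x(S)=S$ for some $x\in Q$. *)

theory Defs
  imports Main "HOL-Library.Disjoint_Sets" "HOL-Library.Extended_Real"
begin

definition gambles :: "('w \<Rightarrow> real) set" where
  "gambles = {f. \<exists>B. \<forall>w. \<bar>f w\<bar> \<le> B}"

definition pos_gambles :: "('w \<Rightarrow> real) set" where
  "pos_gambles = {f \<in> gambles. (\<forall>w. 0 \<le> f w) \<and> f \<noteq> (\<lambda>_. 0)}"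

definition coherent :: "('w \<Rightarrow> real) set \<Rightarrow> bool" where
  "coherent D \<longleftrightarrow> D \<subseteq> gambles \<and> pos_gambles \<subseteq> D \<and> (\<lambda>_. 0::real) \<notin> D
     \<and> (\<forall>f\<in>D. \<forall>g\<in>D. (\<lambda>w. f w + g w) \<in> D)
     \<and> (\<forall>f\<in>D. \<forall>c::real. c > 0 \<longrightarrow> (\<lambda>w. c * f w) \<in> D)"

definition Phi :: "('w \<Rightarrow> real) set set" where
  "Phi = {D. coherent D} \<union> {gambles}"

definition closure_C :: "('w \<Rightarrow> real) set \<Rightarrow> ('w \<Rightarrow> real) set" where
  "closure_C K = \<Inter>{D \<in> Phi. K \<subseteq> D}"

definition combine :: "('w \<Rightarrow> real) set \<Rightarrow> ('w \<Rightarrow> real) set \<Rightarrow> ('w \<Rightarrow> real) set" where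
  "combine D1 D2 = closure_C (D1 \<union> D2)"

definition equiv_x :: "('q \<Rightarrow> 'w set set) \<Rightarrow> 'q \<Rightarrow> 'w \<Rightarrow> 'w \<Rightarrow> bool" where
  "equiv_x P x w w' \<longleftrightarrow> (\<exists>B\<in>P x. w \<in> B \<and> w' \<in> B)"

definition join_part :: "'w set set \<Rightarrow> 'w set set \<Rightarrow> 'w set set" where
  "join_part A B = {a \<inter> b | a b. a \<in> A \<and> b \<in> B \<and> a \<inter> b \<noteq> {}}"

definition L_x :: "('q \<Rightarrow> 'w set set) \<Rightarrow> 'q \<Rightarrow> ('w \<Rightarrow> real) set" where
  "L_x P x = {f \<in> gambles. \<forall>B\<in>P x. \<forall>w\<in>B. \<forall>w'\<in>B. f w = f w'}"

definition eps_x :: "('q \<Rightarrow> 'w set set) \<Rightarrow> 'q \<Rightarrow> ('w \<Rightarrow> real) set \<Rightarrow> ('w \<Rightarrow> real) set" where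
  "eps_x P x D = closure_C (D \<inter> L_x P x)"

definition saturation :: "('q \<Rightarrow> 'w set set) \<Rightarrow> 'q \<Rightarrow> 'w set \<Rightarrow> 'w set" where
  "saturation P x S = {w. \<exists>w'\<in>S. equiv_x P x w w'}"

definition PQ :: "'q set \<Rightarrow> ('q \<Rightarrow> 'w set set) \<Rightarrow> 'w set set" where
  "PQ Q P = {S. \<exists>x\<in>Q. saturation P x S = S}"

text \<open>D_S: gambles whose infimum over S (as an extended real; +infinity on the empty set)
  is positive, together with the nonnegative nonzero gambles.\<close>

definition D_set :: "'w set \<Rightarrow> ('w \<Rightarrow> real) set" where
  "D_set S = {f \<in> gambles. (INF w\<in>S. ereal (f w)) > 0} \<union> pos_gambles"

end

theory Submission
  imports Defs
begin

(* Every D_A lies in Phi (it is coherent unless A is empty) and A \<mapsto> D_A is antitone, so the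
  minimality of closures gives the inclusions "\<subseteq>" in (1) and (3).  Conversely, every member of
  Phi is upward closed, and each f \<in> D_A that is not already in L^+ dominates the two-valued
  gamble that is c > 0 on A and -sup|f| off A.  So it suffices to generate these two-valued
  gambles: for S \<inter> T as a sum of two-valued gambles for S and for T that are negative enough
  off S and off T, and for \<sigma>_x(S) directly, since \<sigma>_x(S) is a union of blocks of P_x, so
  that the two-valued gamble lies in L_x and, as S \<subseteq> \<sigma>_x(S), in D_S. *)

lemma gamblesI: "(\<And>w. \<bar>f w\<bar> \<le> B) \<Longrightarrow> f \<in> gambles"
  unfolding gambles_def by auto

lemma gamblesE:
  assumes "f \<in> gambles"
  obtains B where "\<And>w. \<bar>f w\<bar> \<le> B"
  using assms unfolding gambles_def by auto

lemma gambles_add: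
  assumes "f \<in> gambles" "g \<in> gambles"
  shows "(\<lambda>w. f w + g w) \<in> gambles"
proof -
  obtain A B where "\<And>w. \<bar>f w\<bar> \<le> A" "\<And>w. \<bar>g w\<bar> \<le> B"
    using assms by (meson gamblesE)
  then show ?thesis
    by (intro gamblesI[of _ "A + B"]) (meson abs_triangle_ineq add_mono order_trans)
qed

lemma gambles_scale:
  assumes "f \<in> gambles"
  shows "(\<lambda>w. c * f w) \<in> gambles"
proof -
  obtain B where "\<And>w. \<bar>f w\<bar> \<le> B"
    using assms by (meson gamblesE)
  then show ?thesis
    by (intro gamblesI[of _ "\<bar>c\<bar> * B"]) (simp add: abs_mult mult_left_mono)
qed

lemma gambles_diff: "f \<in> gambles \<Longrightarrow> g \<in> gambles \<Longrightarrow> (\<lambda>w. f w - g w) \<in> gambles"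
  using gambles_add[of f "\<lambda>w. (-1) * g w"] gambles_scale[of g "-1"] by simp

lemma gambles_if_const: "(\<lambda>w. if P w then c else d) \<in> gambles"
  by (rule gamblesI[of _ "max \<bar>c\<bar> \<bar>d\<bar>"]) auto

lemma pos_gambles_subset_gambles: "pos_gambles \<subseteq> gambles"
  unfolding pos_gambles_def by auto

lemma pos_gambles_scale:
  assumes "f \<in> pos_gambles" "k > 0"
  shows "(\<lambda>w. k * f w) \<in> pos_gambles"
proof -
  have "(\<lambda>w. k * f w) \<noteq> (\<lambda>_. 0)"
    using assms unfolding pos_gambles_def by (auto simp: fun_eq_iff)
  with assms show ?thesis
    unfolding pos_gambles_def by (auto intro: gambles_scale)
qed

lemma ereal_INF_pos_iff:
  "(INF w\<in>A. ereal (f w)) > 0 \<longleftrightarrow> (\<exists>c>0. \<forall>w\<in>A. c \<le> f w)"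
proof
  assume "(INF w\<in>A. ereal (f w)) > 0"
  then obtain c where c: "0 < ereal c" "ereal c < (INF w\<in>A. ereal (f w))"
    using ereal_dense2 by blast
  then have "\<forall>w\<in>A. c \<le> f w"
    by (metis INF_lower ereal_less_eq(3) order.strict_trans2 order_less_imp_le)
  with c show "\<exists>c>0. \<forall>w\<in>A. c \<le> f w" by auto
next
  assume "\<exists>c>0. \<forall>w\<in>A. c \<le> f w"
  then obtain c where "c > 0" "\<forall>w\<in>A. c \<le> f w" by auto
  then have "0 < ereal c" "ereal c \<le> (INF w\<in>A. ereal (f w))"
    by (auto intro: INF_greatest)
  then show "(INF w\<in>A. ereal (f w)) > 0" by order
qed

lemma D_set_eq: "D_set A = {f \<in> gambles. \<exists>c>0. \<forall>w\<in>A. c \<le> f w} \<union> pos_gambles"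
  unfolding D_set_def ereal_INF_pos_iff ..

lemma D_set_subset_gambles: "D_set A \<subseteq> gambles"
  using pos_gambles_subset_gambles unfolding D_set_eq by blast

lemma D_set_antimono: "A \<subseteq> B \<Longrightarrow> D_set B \<subseteq> D_set A"
  unfolding D_set_eq by blast

lemma D_set_empty: "D_set {} = gambles"
  using pos_gambles_subset_gambles unfolding D_set_eq by (auto intro: exI[of _ 1])

lemma D_set_UNIV: "D_set UNIV = pos_gambles"
proof -
  have "f \<in> pos_gambles" if "f \<in> gambles" "c > 0" "\<forall>w. c \<le> f w" for f and c :: real
  proof -
    have "\<forall>w. 0 \<le> f w"
      using that by (meson less_imp_le order_trans)
    moreover have "f \<noteq> (\<lambda>_. 0)"
      using that by (metis not_le)
    ultimately show ?thesis
      using \<open>f \<in> gambles\<close> unfolding pos_gambles_def by blast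
  qed
  then show ?thesis
    unfolding D_set_eq by blast
qed

lemma if_in_D_set: "c > 0 \<Longrightarrow> (\<lambda>w. if w \<in> A then c else d) \<in> D_set A"
  unfolding D_set_eq using gambles_if_const by auto

lemma D_set_upward_closed:
  assumes "f \<in> D_set A" "g \<in> gambles" "\<And>w. f w \<le> g w"
  shows "g \<in> D_set A"
proof (cases "f \<in> pos_gambles")
  case True
  then have "\<forall>w. 0 \<le> f w" "f \<noteq> (\<lambda>_. 0)"
    unfolding pos_gambles_def by auto
  then have "\<forall>w. 0 \<le> g w" "g \<noteq> (\<lambda>_. 0)"
    using assms(3) by (auto intro: order_trans) (meson antisym ext)
  with assms(2) show ?thesis
    unfolding D_set_eq pos_gambles_def by blast
next
  case False
  with assms show ?thesis
    unfolding D_set_eq by (blast intro: order_trans)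
qed

lemma D_set_coherent:
  assumes "A \<noteq> {}"
  shows "coherent (D_set A)"
  unfolding coherent_def
proof (intro conjI ballI allI impI)
  show "D_set A \<subseteq> gambles" by (rule D_set_subset_gambles)
  show "pos_gambles \<subseteq> D_set A" unfolding D_set_eq by blast
  show "(\<lambda>_. 0) \<notin> D_set A"
    using assms unfolding D_set_eq pos_gambles_def by force
next
  fix f g assume f: "f \<in> D_set A" and g: "g \<in> D_set A"
  then have sum: "(\<lambda>w. f w + g w) \<in> gambles"
    using D_set_subset_gambles by (blast intro: gambles_add)
  consider "f \<in> pos_gambles" | "g \<in> pos_gambles"
    | c d where "c > 0" "\<forall>w\<in>A. c \<le> f w" "d > 0" "\<forall>w\<in>A. d \<le> g w"
    using f g unfolding D_set_eq by blast
  then show "(\<lambda>w. f w + g w) \<in> D_set A"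
  proof cases
    case 1
    then show ?thesis
      using D_set_upward_closed[OF g sum] unfolding pos_gambles_def by auto
  next
    case 2
    then show ?thesis
      using D_set_upward_closed[OF f sum] unfolding pos_gambles_def by auto
  next
    case 3
    then have "c + d > 0" "\<forall>w\<in>A. c + d \<le> f w + g w"
      by (auto intro: add_mono)
    with sum show ?thesis
      unfolding D_set_eq by blast
  qed
next
  fix f and k :: real assume f: "f \<in> D_set A" and k: "k > 0"
  then have scaled: "(\<lambda>w. k * f w) \<in> gambles"
    using D_set_subset_gambles by (blast intro: gambles_scale)
  from f consider "f \<in> pos_gambles" | c where "c > 0" "\<forall>w\<in>A. c \<le> f w"
    unfolding D_set_eq by blast
  then show "(\<lambda>w. k * f w) \<in> D_set A"
  proof cases
    case 1
    then show ?thesis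
      using pos_gambles_scale k unfolding D_set_eq by blast
  next
    case 2
    then have "k * c > 0" "\<forall>w\<in>A. k * c \<le> k * f w"
      using k by simp_all
    with scaled show ?thesis
      unfolding D_set_eq by blast
  qed
qed

lemma D_set_in_Phi: "D_set A \<in> Phi"
  using D_set_coherent[of A] D_set_empty unfolding Phi_def by (cases "A = {}") auto

lemma closure_C_least: "K \<subseteq> D \<Longrightarrow> D \<in> Phi \<Longrightarrow> closure_C K \<subseteq> D"
  unfolding closure_C_def by auto

lemma closure_C_upper: "K \<subseteq> closure_C K"
  unfolding closure_C_def by auto

lemma pos_gambles_subset_Phi: "D \<in> Phi \<Longrightarrow> pos_gambles \<subseteq> D"
  using pos_gambles_subset_gambles unfolding Phi_def coherent_def by blast

lemma Phi_subset_gambles: "D \<in> Phi \<Longrightarrow> D \<subseteq> gambles"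
  unfolding Phi_def coherent_def by blast

lemma Phi_add:
  assumes "D \<in> Phi" "f \<in> D" "g \<in> D"
  shows "(\<lambda>w. f w + g w) \<in> D"
  using assms gambles_add unfolding Phi_def coherent_def by blast

lemma Phi_upward_closed:
  assumes "D \<in> Phi" "f \<in> D" "g \<in> gambles" "\<And>w. f w \<le> g w"
  shows "g \<in> D"
proof (cases "(\<lambda>w. g w - f w) = (\<lambda>_. 0)")
  case True
  then have "g = f" by (simp add: fun_eq_iff)
  with assms(2) show ?thesis by simp
next
  case False
  have "f \<in> gambles"
    using assms(1,2) Phi_subset_gambles by blast
  with False assms(3,4) have "(\<lambda>w. g w - f w) \<in> pos_gambles"
    unfolding pos_gambles_def by (simp add: gambles_diff)
  then have "(\<lambda>w. f w + (g w - f w)) \<in> D"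
    using assms(1,2) pos_gambles_subset_Phi Phi_add by blast
  then show ?thesis by simp
qed

lemma closure_C_upward_closed:
  assumes "f \<in> closure_C K" "g \<in> gambles" "\<And>w. f w \<le> g w"
  shows "g \<in> closure_C K"
  using assms Phi_upward_closed unfolding closure_C_def by blast

lemma closure_C_add:
  "f \<in> closure_C K \<Longrightarrow> g \<in> closure_C K \<Longrightarrow> (\<lambda>w. f w + g w) \<in> closure_C K"
  unfolding closure_C_def using Phi_add by blast

lemma pos_gambles_subset_closure_C: "pos_gambles \<subseteq> closure_C K"
  unfolding closure_C_def using pos_gambles_subset_Phi by blast

lemma D_set_subset_closure_C:
  assumes "\<And>c d. c > 0 \<Longrightarrow> (\<lambda>w. if w \<in> A then c else d) \<in> closure_C K"
  shows "D_set A \<subseteq> closure_C K"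
proof
  fix f assume "f \<in> D_set A"
  then consider "f \<in> pos_gambles" | c where "f \<in> gambles" "c > 0" "\<forall>w\<in>A. c \<le> f w"
    unfolding D_set_eq by blast
  then show "f \<in> closure_C K"
  proof cases
    case 1
    then show ?thesis using pos_gambles_subset_closure_C by blast
  next
    case 2
    then obtain B where B: "\<And>w. \<bar>f w\<bar> \<le> B"
      by (meson gamblesE)
    have below: "(if w \<in> A then c else - B) \<le> f w" for w
      using 2 B[of w] by auto
    show ?thesis
      using closure_C_upward_closed[OF assms[OF \<open>c > 0\<close>] \<open>f \<in> gambles\<close> below] .
  qed
qed

lemma combine_D_set: "combine (D_set S) (D_set T) = D_set (S \<inter> T)"
  unfolding combine_def
proof
  show "closure_C (D_set S \<union> D_set T) \<subseteq> D_set (S \<inter> T)"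
    using D_set_antimono[of "S \<inter> T" S] D_set_antimono[of "S \<inter> T" T]
    by (intro closure_C_least D_set_in_Phi) blast
  show "D_set (S \<inter> T) \<subseteq> closure_C (D_set S \<union> D_set T)"
  proof (rule D_set_subset_closure_C)
    fix c d :: real assume "c > 0"
    define e where "e = - \<bar>d\<bar> - c"
    let ?K = "D_set S \<union> D_set T"
    have "(\<lambda>w. if w \<in> S then c / 2 else e) \<in> closure_C ?K"
      using if_in_D_set[of "c / 2" S e] \<open>c > 0\<close> closure_C_upper[of ?K] by auto
    moreover have "(\<lambda>w. if w \<in> T then c / 2 else e) \<in> closure_C ?K"
      using if_in_D_set[of "c / 2" T e] \<open>c > 0\<close> closure_C_upper[of ?K] by auto
    ultimately have "(\<lambda>w. (if w \<in> S then c / 2 else e) + (if w \<in> T then c / 2 else e))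
        \<in> closure_C ?K"
      by (rule closure_C_add)
    moreover have "(if w \<in> S then c / 2 else e) + (if w \<in> T then c / 2 else e)
        \<le> (if w \<in> S \<inter> T then c else d)" for w
      using \<open>c > 0\<close> abs_ge_self[of d] abs_ge_minus_self[of d] unfolding e_def by auto
    ultimately show "(\<lambda>w. if w \<in> S \<inter> T then c else d) \<in> closure_C ?K"
      by (rule closure_C_upward_closed[OF _ gambles_if_const])
  qed
qed

lemma subset_saturation: "partition_on UNIV (P x) \<Longrightarrow> S \<subseteq> saturation P x S"
  unfolding partition_on_def saturation_def equiv_x_def by blast

lemma mem_saturation_block:
  assumes "partition_on UNIV (P x)" "B \<in> P x" "w \<in> B" "w' \<in> B" "w' \<in> saturation P x S"
  shows "w \<in> saturation P x S"
proof -
  obtain u B' where "u \<in> S" and "B' \<in> P x" "w' \<in> B'" "u \<in> B'"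
    using assms(5) unfolding saturation_def equiv_x_def by blast
  moreover have "B' = B"
    using disjointD[OF partition_onD2[OF assms(1)] \<open>B' \<in> P x\<close> assms(2)]
      \<open>w' \<in> B'\<close> assms(4) by blast
  ultimately show ?thesis
    using assms(2,3) unfolding saturation_def equiv_x_def by blast
qed

lemma if_saturation_in_L_x:
  assumes "partition_on UNIV (P x)"
  shows "(\<lambda>w. if w \<in> saturation P x S then c else d) \<in> L_x P x"
proof -
  have eq: "(if w \<in> saturation P x S then c else d) = (if w' \<in> saturation P x S then c else d)"
    if "B \<in> P x" "w \<in> B" "w' \<in> B" for B w w'
    using mem_saturation_block[of P x B w w' S, OF assms that]
      mem_saturation_block[of P x B w' w S, OF assms that(1,3,2)] by metis
  show ?thesis
    unfolding L_x_def by (intro CollectI conjI ballI gambles_if_const) (blast intro: eq)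
qed

lemma L_x_equiv_x_eq: "f \<in> L_x P x \<Longrightarrow> equiv_x P x w w' \<Longrightarrow> f w = f w'"
  unfolding L_x_def equiv_x_def by blast

lemma D_set_inter_L_x_subset: "D_set S \<inter> L_x P x \<subseteq> D_set (saturation P x S)"
proof
  fix f assume f: "f \<in> D_set S \<inter> L_x P x"
  then consider "f \<in> pos_gambles" | c where "f \<in> gambles" "c > 0" "\<forall>w\<in>S. c \<le> f w"
    unfolding D_set_eq by blast
  then show "f \<in> D_set (saturation P x S)"
  proof cases
    case 1
    then show ?thesis unfolding D_set_eq by blast
  next
    case 2
    have "\<forall>w\<in>saturation P x S. c \<le> f w"
    proof
      fix w assume "w \<in> saturation P x S"
      then obtain w' where "w' \<in> S" "equiv_x P x w w'"
        unfolding saturation_def by blast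
      with f 2 show "c \<le> f w"
        using L_x_equiv_x_eq[of f P x w w'] by simp
    qed
    with 2 show ?thesis
      unfolding D_set_eq by blast
  qed
qed

lemma eps_x_D_set:
  assumes "partition_on UNIV (P x)"
  shows "eps_x P x (D_set S) = D_set (saturation P x S)"
  unfolding eps_x_def
proof
  show "closure_C (D_set S \<inter> L_x P x) \<subseteq> D_set (saturation P x S)"
    by (intro closure_C_least D_set_inter_L_x_subset D_set_in_Phi)
  show "D_set (saturation P x S) \<subseteq> closure_C (D_set S \<inter> L_x P x)"
  proof (rule D_set_subset_closure_C)
    fix c d :: real assume "c > 0"
    then have "(\<lambda>w. if w \<in> saturation P x S then c else d) \<in> D_set S"
      using if_in_D_set D_set_antimono[OF subset_saturation[of P x S, OF assms]] by blast
    then show "(\<lambda>w. if w \<in> saturation P x S then c else d) \<in> closure_C (D_set S \<inter> L_x P x)"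
      using if_saturation_in_L_x[of P x, OF assms] closure_C_upper by blast
  qed
qed

theorem theorem4:
  fixes Q :: "'q set" and P :: "'q \<Rightarrow> 'w set set"
  assumes partitions: "\<forall>x\<in>Q. partition_on UNIV (P x)"
    and join_closed: "\<forall>x\<in>Q. \<forall>y\<in>Q. \<exists>z\<in>Q. P z = join_part (P x) (P y)"
    and S: "S \<in> PQ Q P" and T: "T \<in> PQ Q P" and x: "x \<in> Q"
  shows "combine (D_set S) (D_set T) = D_set (S \<inter> T)
     \<and> D_set {} = gambles \<and> D_set UNIV = pos_gambles
     \<and> eps_x P x (D_set S) = D_set (saturation P x S)"
proof -
  have "partition_on UNIV (P x)"
    using partitions x by blast
  then show ?thesis
    by (intro conjI combine_D_set D_set_empty D_set_UNIV eps_x_D_set)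
qed

end
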